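(* Let $n\ge3$, let $t_1,\dots,t_m\in\mathcal{T}_n$ and let $w_1,\dots,w_m$ be positive real weights, and let $c$ be the weighted asymmetric tropical consensus tree of $(t_1,w_1),\dots,(t_m,w_m)$. Then for all distinct leaves $i,j,k\in[n]$: (Pareto) if every $t_l$ contains the rooted triple $ij|k$, then $c$ contains $ij|k$; (co-Pareto) if $c$ contains $ij|k$, then at least one $t_l$ contains $ij|k$.
   Context: $N=\binom n2$, coordinates of $\mathbb{R}^N$ indexed by pairs $\{i,j\}\subset[n]$. An ultrametric is $\delta\in\mathbb{R}^N$ such that for all distinct $i,j,k$ the maximum of $\delta(i,j),\delta(i,k),\delta(j,k)$ is attained at least twice; ultrametrics are exactly the leaf-to-leaf distance vectors of equidistant rooted phylogenetic trees. $\mathcal{T}_n=\{-\delta:\delta\text{ ultrametric}\}$, viewed in $\mathbb{R}^N/\mathbb{R}\mathbf{1}_N$ and identified with $H_N=\{x\in\mathbb{R}^N:\sum x=0\}$. For $x,y\in H_N$, $d_\Delta(x,y)=N\max_p(x_p-y_p)$; the weighted Fermat–Weber set is $\mathrm{FW}(T,w)=\operatorname{argmin}_{x\in H_N}\sum_l w_l d_\Delta(x,t_l)$, a bounded polytope. The weighted asymmetric tropical consensus tree is the classical average of the vertices of $\mathrm{FW}(T,w)$ (a point of $\mathcal{T}_n$). A point $x\in\mathcal{T}_n$, with $\delta=-x$ (any representative), contains the rooted triple $ij|k$ if $\delta(i,j)<\delta(i,k)=\delta(j,k)$. *)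

theory Defs
  imports Main "HOL-Library.Lattice_Algebras" Complex_Main
begin

text \<open>Leaves are 0,...,n-1. Coordinates of R^N (N = n choose 2) are indexed by the
  2-element subsets of the leaf set. A point of R^N is a function on index sets that
  vanishes outside these pairs.\<close>

definition pairs :: "nat \<Rightarrow> nat set set" where
  "pairs n = {p. p \<subseteq> {..<n} \<and> card p = 2}"

definition HN :: "nat \<Rightarrow> (nat set \<Rightarrow> real) set" where
  "HN n = {x. (\<forall>p. p \<notin> pairs n \<longrightarrow> x p = 0) \<and> (\<Sum>p\<in>pairs n. x p) = 0}"

definition ultrametric :: "nat \<Rightarrow> (nat set \<Rightarrow> real) \<Rightarrow> bool" where
  "ultrametric n \<delta> \<longleftrightarrow>
    (\<forall>i<n. \<forall>j<n. \<forall>k<n. i \<noteq> j \<and> i \<noteq> k \<and> j \<noteq> k \<longrightarrow>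
       (let a = \<delta> {i,j}; b = \<delta> {i,k}; c = \<delta> {j,k} in
         (a = b \<and> c \<le> a) \<or> (a = c \<and> b \<le> a) \<or> (b = c \<and> a \<le> b)))"

text \<open>T_n as a subset of R^N / R1, identified with H_N: points x of H_N such that x is
  congruent modulo R1 to -delta for an ultrametric delta.\<close>
definition tree_space :: "nat \<Rightarrow> (nat set \<Rightarrow> real) set" where
  "tree_space n = {x \<in> HN n. \<exists>\<delta> c. ultrametric n \<delta> \<and> (\<forall>p\<in>pairs n. x p = - \<delta> p + c)}"

definition d_trop :: "nat \<Rightarrow> (nat set \<Rightarrow> real) \<Rightarrow> (nat set \<Rightarrow> real) \<Rightarrow> real" where
  "d_trop n x y = real (n choose 2) * (MAX p\<in>pairs n. x p - y p)"

definition FW_set :: "nat \<Rightarrow> nat \<Rightarrow> (nat \<Rightarrow> nat set \<Rightarrow> real) \<Rightarrow> (nat \<Rightarrow> real) \<Rightarrow> (nat set \<Rightarrow> real) set" where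
  "FW_set n m t w = {x \<in> HN n. \<forall>y\<in>HN n.
      (\<Sum>l<m. w l * d_trop n x (t l)) \<le> (\<Sum>l<m. w l * d_trop n y (t l))}"

definition vertices :: "(nat set \<Rightarrow> real) set \<Rightarrow> (nat set \<Rightarrow> real) set" where
  "vertices S = {v \<in> S. \<not> (\<exists>a\<in>S. \<exists>b\<in>S. \<exists>u::real. a \<noteq> b \<and> 0 < u \<and> u < 1 \<and>
       v = (\<lambda>p. (1 - u) * a p + u * b p))}"

definition consensus :: "nat \<Rightarrow> nat \<Rightarrow> (nat \<Rightarrow> nat set \<Rightarrow> real) \<Rightarrow> (nat \<Rightarrow> real) \<Rightarrow> (nat set \<Rightarrow> real)" where
  "consensus n m t w =
     (let V = vertices (FW_set n m t w) in (\<lambda>p. (\<Sum>v\<in>V. v p) / real (card V)))"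

definition has_triple :: "(nat set \<Rightarrow> real) \<Rightarrow> nat \<Rightarrow> nat \<Rightarrow> nat \<Rightarrow> bool" where
  "has_triple x i j k \<longleftrightarrow> - x {i,j} < - x {i,k} \<and> - x {i,k} = - x {j,k}"

end

theory Submission
  imports Defs "HOL-Analysis.Analysis"
begin

text \<open>
  If \<open>x\<close> is a Fermat--Weber point and coordinate \<open>q\<close> lies, relative to every tree
  \<open>t\<^sub>l\<close>, strictly below some coordinate \<open>r\<close>, then raising \<open>x\<^sub>q\<close> a little (and re-centring
  in \<open>H\<^sub>N\<close>) lowers every distance \<open>d\<^sub>\<Delta>(x, t\<^sub>l)\<close>, which is impossible. Hence every
  Fermat--Weber point inherits each weak or strict inequality between two coordinates that
  holds in all the trees, and so does the consensus, an average of Fermat--Weber points: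
  this gives the Pareto property, and the co-Pareto property follows because a tree without
  \<open>ij|k\<close> satisfies \<open>\<delta>(i,k) \<le> \<delta>(i,j)\<close>.

  For the average to be meaningful the set of vertices must be finite and nonempty. It is
  finite because a vertex is determined by the sets of coordinates attaining the maxima in
  \<open>d\<^sub>\<Delta>(x, t\<^sub>l)\<close>: two Fermat--Weber points with the same pattern can be extrapolated
  slightly beyond each other inside the Fermat--Weber set. It is nonempty because the
  Fermat--Weber set is compact and nonempty (the cost is coercive on \<open>H\<^sub>N\<close>), and a maximiser
  of the strictly convex function \<open>\<Sum> x\<^sub>p\<^sup>2\<close> on it is a vertex.
\<close>

lemma finite_pairs: "finite (pairs n)"
  by (rule finite_subset[of _ "Pow {..<n}"]) (auto simp: pairs_def)

lemma card_pairs: "card (pairs n) = n choose 2"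
  by (simp add: pairs_def n_subsets)

lemma doubleton_in_pairs: "i < n \<Longrightarrow> j < n \<Longrightarrow> i \<noteq> j \<Longrightarrow> {i, j} \<in> pairs n"
  by (auto simp: pairs_def)

lemma pairs_nonempty: "2 \<le> n \<Longrightarrow> pairs n \<noteq> {}"
  using doubleton_in_pairs[of 0 n 1] by auto

lemma HN_outside_pairs: "x \<in> HN n \<Longrightarrow> p \<notin> pairs n \<Longrightarrow> x p = 0"
  by (simp add: HN_def)

lemma d_trop_ge:
  assumes "q \<in> pairs n"
  shows "real (card (pairs n)) * (x q - y q) \<le> d_trop n x y"
  unfolding d_trop_def card_pairs[symmetric]
  using assms by (intro mult_left_mono Max_ge finite_imageI finite_pairs) auto

lemma d_trop_le:
  assumes "pairs n \<noteq> {}" and "\<And>p. p \<in> pairs n \<Longrightarrow> x p - y p \<le> c"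
  shows "d_trop n x y \<le> real (card (pairs n)) * c"
  unfolding d_trop_def card_pairs[symmetric]
  using assms by (intro mult_left_mono) (auto simp: finite_pairs)

definition fw_cost :: "nat \<Rightarrow> nat \<Rightarrow> (nat \<Rightarrow> nat set \<Rightarrow> real) \<Rightarrow> (nat \<Rightarrow> real) \<Rightarrow>
    (nat set \<Rightarrow> real) \<Rightarrow> real" where
  "fw_cost n m t w x = (\<Sum>l<m. w l * d_trop n x (t l))"

lemma FW_set_iff:
  "x \<in> FW_set n m t w \<longleftrightarrow> x \<in> HN n \<and> (\<forall>y\<in>HN n. fw_cost n m t w x \<le> fw_cost n m t w y)"
  by (simp add: FW_set_def fw_cost_def)

definition raise_coordinate :: "nat \<Rightarrow> nat set \<Rightarrow> real \<Rightarrow> (nat set \<Rightarrow> real) \<Rightarrow> nat set \<Rightarrow> real" where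
  "raise_coordinate n q e x =
     (\<lambda>p. if p \<in> pairs n then x p + (if p = q then e else 0) - e / real (card (pairs n)) else 0)"

lemma raise_coordinate_in_HN:
  assumes "x \<in> HN n" and "q \<in> pairs n"
  shows "raise_coordinate n q e x \<in> HN n"
proof -
  have "card (pairs n) \<noteq> 0"
    using assms(2) finite_pairs by (auto simp: card_eq_0_iff)
  then have "(\<Sum>p\<in>pairs n. raise_coordinate n q e x p) = (\<Sum>p\<in>pairs n. x p)"
    using assms(2) finite_pairs
    by (simp add: raise_coordinate_def sum.distrib sum_subtractf)
  then show ?thesis
    using assms(1) by (simp add: HN_def raise_coordinate_def)
qed

lemma d_trop_raise_coordinate:
  assumes q: "q \<in> pairs n" and r: "r \<in> pairs n" and gap: "x q - y q + e \<le> x r - y r"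
  shows "d_trop n (raise_coordinate n q e x) y \<le> d_trop n x y - e"
proof -
  define K where "K = real (card (pairs n))"
  define M where "M = (MAX p\<in>pairs n. x p - y p)"
  have K: "0 < K"
    using q finite_pairs by (auto simp: K_def card_gt_0_iff)
  have below_M: "x p - y p \<le> M" if "p \<in> pairs n" for p
    using that by (simp add: M_def finite_pairs)
  have "raise_coordinate n q e x p - y p \<le> M - e / K" if "p \<in> pairs n" for p
    using that gap below_M[OF r] below_M[OF that] by (auto simp: raise_coordinate_def K_def)
  then have "d_trop n (raise_coordinate n q e x) y \<le> K * (M - e / K)"
    using q unfolding K_def by (intro d_trop_le) auto
  also have "\<dots> = d_trop n x y - e"
    using K by (simp add: d_trop_def M_def K_def card_pairs right_diff_distrib)
  finally show ?thesis .
qed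

lemma FW_set_not_uniformly_below:
  assumes m: "1 \<le> m" and w: "\<And>l. l < m \<Longrightarrow> 0 < w l" and x: "x \<in> FW_set n m t w"
    and q: "q \<in> pairs n" and r: "r \<in> pairs n"
  shows "\<not> (\<forall>l<m. x q - t l q < x r - t l r)"
proof
  assume below: "\<forall>l<m. x q - t l q < x r - t l r"
  define e where "e = (MIN l\<in>{..<m}. (x r - t l r) - (x q - t l q))"
  have e: "0 < e"
    using m below by (simp add: e_def lessThan_empty_iff)
  have "x q - t l q + e \<le> x r - t l r" if "l < m" for l
  proof -
    have "e \<le> (x r - t l r) - (x q - t l q)"
      unfolding e_def using that by (intro Min_le) auto
    then show ?thesis by simp
  qed
  then have "fw_cost n m t w (raise_coordinate n q e x) \<le> (\<Sum>l<m. w l * (d_trop n x (t l) - e))"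
    unfolding fw_cost_def using w
    by (intro sum_mono mult_left_mono d_trop_raise_coordinate[OF q r]) (auto intro: less_imp_le)
  also have "\<dots> = fw_cost n m t w x - e * (\<Sum>l<m. w l)"
    by (simp add: fw_cost_def right_diff_distrib sum_subtractf sum_distrib_left mult.commute)
  also have "\<dots> < fw_cost n m t w x"
  proof -
    have "0 < (\<Sum>l<m. w l)"
      using m w by (intro sum_pos) (auto simp: lessThan_empty_iff)
    then show ?thesis
      using e by simp
  qed
  finally show False
    using x q raise_coordinate_in_HN[of x n q e] by (auto simp: FW_set_iff)
qed

lemma FW_set_mono:
  assumes "1 \<le> m" "\<And>l. l < m \<Longrightarrow> 0 < w l" "x \<in> FW_set n m t w" "a \<in> pairs n" "b \<in> pairs n"
    and "\<And>l. l < m \<Longrightarrow> t l a \<le> t l b"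
  shows "x a \<le> x b"
  using FW_set_not_uniformly_below[OF assms(1-3,5,4)] assms(6) by force

lemma FW_set_strict_mono:
  assumes "1 \<le> m" "\<And>l. l < m \<Longrightarrow> 0 < w l" "x \<in> FW_set n m t w" "a \<in> pairs n" "b \<in> pairs n"
    and "\<And>l. l < m \<Longrightarrow> t l a < t l b"
  shows "x a < x b"
  using FW_set_not_uniformly_below[OF assms(1-3,5,4)] assms(6) by force

lemma eventually_Max_extrapolate_le:
  fixes f g :: "'a \<Rightarrow> real"
  assumes P: "finite P"
    and argmax: "\<And>p. p \<in> P \<Longrightarrow> f p = (MAX q\<in>P. f q) \<Longrightarrow> g p = (MAX q\<in>P. g q)"
  shows "\<forall>\<^sub>F s in at_right 0.
           (MAX p\<in>P. (1 + s) * f p - s * g p) \<le> (1 + s) * (MAX p\<in>P. f p) - s * (MAX p\<in>P. g p)"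
proof (cases "P = {}")
  case True
  then show ?thesis by (simp add: algebra_simps)
next
  case False
  define Mf where "Mf = (MAX p\<in>P. f p)"
  define Mg where "Mg = (MAX p\<in>P. g p)"
  have "\<forall>\<^sub>F s in at_right 0. (1 + s) * f p - s * g p \<le> (1 + s) * Mf - s * Mg" if p: "p \<in> P" for p
  proof (cases "f p = Mf")
    case True
    then show ?thesis
      using argmax[OF p] by (simp add: Mf_def Mg_def)
  next
    case False
    then have "0 < Mf - f p"
      using P p by (simp add: Mf_def order.strict_iff_order)
    moreover have "((\<lambda>s. (Mf - f p) + s * ((Mf - f p) - (Mg - g p))) \<longlongrightarrow> Mf - f p) (at_right 0)"
      by (auto intro!: tendsto_eq_intros)
    ultimately have "\<forall>\<^sub>F s in at_right 0. 0 < (Mf - f p) + s * ((Mf - f p) - (Mg - g p))"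
      by (simp add: order_tendstoD(1))
    then show ?thesis
      by eventually_elim (simp add: algebra_simps)
  qed
  then have "\<forall>\<^sub>F s in at_right 0. \<forall>p\<in>P. (1 + s) * f p - s * g p \<le> (1 + s) * Mf - s * Mg"
    by (rule eventually_ball_finite[OF P, rule_format])
  then show ?thesis
    by eventually_elim (use P False in \<open>simp add: Mf_def Mg_def\<close>)
qed

lemma extrapolation_not_in_vertices:
  assumes z_in: "(\<lambda>p. (1 + s) * u p - s * v p) \<in> S" and v: "v \<in> S" and s: "0 < s" and "u \<noteq> v"
  shows "u \<notin> vertices S"
proof
  assume u: "u \<in> vertices S"
  define z where "z = (\<lambda>p. (1 + s) * u p - s * v p)"
  define a where "a = s / (1 + s)"
  have a: "0 < a" "a < 1"
    using s by (auto simp: a_def)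
  have one_minus_a: "1 - a = 1 / (1 + s)"
    using s by (simp add: a_def field_simps)
  have "u p = (1 - a) * z p + a * v p" for p
    unfolding one_minus_a unfolding a_def z_def
    using s by (simp add: add_divide_distrib[symmetric])
  then have comb: "u = (\<lambda>p. (1 - a) * z p + a * v p)" ..
  have "z \<noteq> v"
  proof
    assume "z = v"
    have "(1 + s) * u p = (1 + s) * v p" for p
    proof -
      from \<open>z = v\<close> have "z p = v p"
        by simp
      then show ?thesis
        by (simp add: z_def algebra_simps)
    qed
    then have "u = v"
      using s by (simp add: fun_eq_iff)
    with \<open>u \<noteq> v\<close> show False ..
  qed
  moreover have "z \<in> S"
    using z_in by (simp add: z_def)
  ultimately have "\<exists>x\<in>S. \<exists>y\<in>S. \<exists>c::real. x \<noteq> y \<and> 0 < c \<and> c < 1 \<and> u = (\<lambda>p. (1 - c) * x p + c * y p)"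
    using v a comb by blast
  with u show False
    unfolding vertices_def by blast
qed

definition max_pairs :: "nat \<Rightarrow> (nat set \<Rightarrow> real) \<Rightarrow> (nat set \<Rightarrow> real) \<Rightarrow> nat set set" where
  "max_pairs n x y = {p \<in> pairs n. x p - y p = (MAX q\<in>pairs n. x q - y q)}"

lemma eventually_d_trop_extrapolate_le:
  assumes "max_pairs n u y \<subseteq> max_pairs n v y"
  shows "\<forall>\<^sub>F s in at_right 0.
           d_trop n (\<lambda>p. (1 + s) * u p - s * v p) y \<le> (1 + s) * d_trop n u y - s * d_trop n v y"
proof -
  have "\<forall>\<^sub>F s in at_right 0.
          (MAX p\<in>pairs n. (1 + s) * (u p - y p) - s * (v p - y p))
            \<le> (1 + s) * (MAX p\<in>pairs n. u p - y p) - s * (MAX p\<in>pairs n. v p - y p)"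
    using assms by (intro eventually_Max_extrapolate_le finite_pairs) (auto simp: max_pairs_def)
  then show ?thesis
  proof eventually_elim
    case (elim s)
    have "d_trop n (\<lambda>p. (1 + s) * u p - s * v p) y
        = real (n choose 2) * (MAX p\<in>pairs n. (1 + s) * (u p - y p) - s * (v p - y p))"
      unfolding d_trop_def
      by (intro arg_cong[where f = "\<lambda>h. real (n choose 2) * Max (h ` pairs n)"] ext)
        (simp add: algebra_simps)
    also have "\<dots> \<le> real (n choose 2)
        * ((1 + s) * (MAX p\<in>pairs n. u p - y p) - s * (MAX p\<in>pairs n. v p - y p))"
      using elim by (simp add: mult_left_mono)
    also have "\<dots> = (1 + s) * d_trop n u y - s * d_trop n v y"
      by (simp add: d_trop_def algebra_simps)
    finally show ?case .
  qed
qed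

lemma ex_extrapolation_in_FW_set:
  assumes w: "\<And>l. l < m \<Longrightarrow> 0 \<le> w l" and u: "u \<in> FW_set n m t w" and v: "v \<in> FW_set n m t w"
    and same: "\<And>l. l < m \<Longrightarrow> max_pairs n u (t l) = max_pairs n v (t l)"
  shows "\<exists>s>0. (\<lambda>p. (1 + s) * u p - s * v p) \<in> FW_set n m t w"
proof -
  have "\<forall>\<^sub>F s in at_right 0. \<forall>l\<in>{..<m}.
          d_trop n (\<lambda>p. (1 + s) * u p - s * v p) (t l) \<le> (1 + s) * d_trop n u (t l) - s * d_trop n v (t l)"
    (is "\<forall>\<^sub>F s in _. ?bound s")
  proof (rule eventually_ball_finite[OF finite_lessThan], intro ballI eventually_d_trop_extrapolate_le)
    fix l
    assume "l \<in> {..<m}"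
    with same show "max_pairs n u (t l) \<subseteq> max_pairs n v (t l)"
      by simp
  qed
  then have "\<forall>\<^sub>F s in at_right 0. 0 < s \<and> ?bound s"
    by (intro eventually_conj eventually_at_right_less)
  then obtain s where s: "0 < s" and bound: "?bound s"
    using eventually_happens'[OF trivial_limit_at_right_real] by blast
  define z where "z = (\<lambda>p. (1 + s) * u p - s * v p)"
  have uH: "u \<in> HN n" and vH: "v \<in> HN n"
    using u v by (auto simp: FW_set_iff)
  have zH: "z \<in> HN n"
    using uH vH by (simp add: HN_def z_def sum_subtractf sum_distrib_left[symmetric])
  have "fw_cost n m t w z \<le> (\<Sum>l<m. w l * ((1 + s) * d_trop n u (t l) - s * d_trop n v (t l)))"
    unfolding fw_cost_def z_def using bound w by (intro sum_mono mult_left_mono) auto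
  also have "\<dots> = (1 + s) * fw_cost n m t w u - s * fw_cost n m t w v"
    by (simp add: fw_cost_def algebra_simps sum_subtractf sum_distrib_left)
  also have "\<dots> = fw_cost n m t w u"
    using u v uH vH by (auto simp: FW_set_iff algebra_simps intro: antisym)
  finally have "z \<in> FW_set n m t w"
    using u zH by (auto simp: FW_set_iff intro: order_trans)
  with s show ?thesis
    unfolding z_def by blast
qed

lemma finite_vertices_FW_set:
  assumes w: "\<And>l. l < m \<Longrightarrow> 0 \<le> w l"
  shows "finite (vertices (FW_set n m t w))"
proof -
  define V where "V = vertices (FW_set n m t w)"
  define pattern where "pattern = (\<lambda>x. restrict (\<lambda>l. max_pairs n x (t l)) {..<m})"
  have "inj_on pattern V"
  proof (rule inj_onI, rule ccontr)
    fix u v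
    assume u: "u \<in> V" and v: "v \<in> V" and eq: "pattern u = pattern v" and "u \<noteq> v"
    have "max_pairs n u (t l) = max_pairs n v (t l)" if "l < m" for l
      using fun_cong[OF eq, of l] that by (simp add: pattern_def)
    moreover have "u \<in> FW_set n m t w" "v \<in> FW_set n m t w"
      using u v by (auto simp: V_def vertices_def)
    ultimately obtain s where "0 < s" and "(\<lambda>p. (1 + s) * u p - s * v p) \<in> FW_set n m t w"
      using ex_extrapolation_in_FW_set[of m w, OF w] by blast
    then have "u \<notin> V"
      unfolding V_def using \<open>v \<in> FW_set n m t w\<close> \<open>u \<noteq> v\<close>
      by (intro extrapolation_not_in_vertices)
    with u show False
      by blast
  qed
  have "pattern ` V \<subseteq> PiE {..<m} (\<lambda>_. Pow (pairs n))"
    by (auto simp: pattern_def max_pairs_def)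
  moreover have "finite (PiE {..<m} (\<lambda>_. Pow (pairs n)))"
    by (intro finite_PiE finite_Pow_iff[THEN iffD2] finite_pairs) auto
  ultimately have "finite (pattern ` V)"
    by (rule finite_subset)
  then show ?thesis
    using \<open>inj_on pattern V\<close> unfolding V_def by (rule finite_imageD)
qed

lemma continuous_on_Max_finite:
  fixes f :: "'a::topological_space \<Rightarrow> 'b \<Rightarrow> real"
  assumes "finite P" and "\<And>p. p \<in> P \<Longrightarrow> continuous_on S (\<lambda>x. f x p)"
  shows "continuous_on S (\<lambda>x. MAX p\<in>P. f x p)"
proof (cases "P = {}")
  case False
  from assms(1) False assms(2) show ?thesis
  proof (induction P rule: finite_ne_induct)
    case (insert a P)
    then show ?case
      by (auto intro!: continuous_on_max)
  qed simp
qed simp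

lemma continuous_on_fw_cost: "continuous_on UNIV (fw_cost n m t w)"
  unfolding fw_cost_def d_trop_def
  by (intro continuous_intros continuous_on_Max_finite finite_pairs continuous_on_product_coordinates)

lemma closed_HN: "closed (HN n)"
proof -
  have "HN n = (\<Inter>p\<in>- pairs n. {x. x p = 0}) \<inter> {x. (\<Sum>p\<in>pairs n. x p) = 0}"
    by (auto simp: HN_def)
  then show ?thesis
    by (simp only:) (intro closed_Int closed_INT ballI closed_Collect_eq continuous_on_sum
        continuous_on_product_coordinates continuous_on_const)
qed

lemma closed_FW_set: "closed (FW_set n m t w)"
proof -
  have "FW_set n m t w = HN n \<inter> (\<Inter>y\<in>HN n. {x. fw_cost n m t w x \<le> fw_cost n m t w y})"
    by (auto simp: FW_set_iff)
  then show ?thesis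
    by (simp only:) (intro closed_Int closed_HN closed_INT ballI closed_Collect_le
        continuous_on_fw_cost continuous_on_const)
qed

lemma compact_abs_le_box: "compact {x :: 'a \<Rightarrow> real. \<forall>p. \<bar>x p\<bar> \<le> B}"
proof -
  have "c \<in> {-B..B} \<longleftrightarrow> \<bar>c\<bar> \<le> B" for c :: real
    by auto
  then have "{x :: 'a \<Rightarrow> real. \<forall>p. \<bar>x p\<bar> \<le> B} = PiE UNIV (\<lambda>_. {-B..B})"
    by (auto simp: PiE_iff)
  moreover have "compactin (product_topology (\<lambda>_. euclidean) UNIV) (PiE UNIV (\<lambda>_. {-B..B :: real}))"
    by (simp add: compactin_PiE)
  ultimately show ?thesis
    by (simp only: euclidean_product_topology compactin_euclidean_iff)
qed

lemma HN_abs_le: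
  assumes x: "x \<in> HN n" and above: "\<And>q. q \<in> pairs n \<Longrightarrow> x q \<le> c" and c: "0 \<le> c"
  shows "\<bar>x p\<bar> \<le> real (card (pairs n)) * c"
proof (cases "p \<in> pairs n")
  case False
  then show ?thesis
    using x c by (simp add: HN_outside_pairs)
next
  case p: True
  have K: "1 \<le> real (card (pairs n))"
    using p finite_pairs by (auto simp: Suc_le_eq card_gt_0_iff)
  have "c \<le> real (card (pairs n)) * c"
    using K c mult_right_mono[of 1 "real (card (pairs n))" c] by simp
  then have "x p \<le> real (card (pairs n)) * c"
    using above[OF p] by linarith
  moreover have "- (real (card (pairs n)) * c) \<le> x p"
  proof -
    have "0 = x p + (\<Sum>q\<in>pairs n - {p}. x q)"
      using x p finite_pairs by (simp add: HN_def sum.remove)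
    moreover have "(\<Sum>q\<in>pairs n - {p}. x q) \<le> real (card (pairs n - {p})) * c"
      using above by (intro sum_bounded_above) auto
    moreover have "real (card (pairs n - {p})) * c \<le> real (card (pairs n)) * c"
      using c finite_pairs by (intro mult_right_mono) (auto simp: card_mono)
    ultimately show ?thesis
      by linarith
  qed
  ultimately show ?thesis
    by (simp add: abs_le_iff)
qed

lemma fw_cost_sublevel_bounded:
  assumes n: "2 \<le> n" and m: "1 \<le> m" and w: "\<And>l. l < m \<Longrightarrow> 0 < w l"
  shows "\<exists>B. \<forall>y\<in>HN n. fw_cost n m t w y \<le> fw_cost n m t w (\<lambda>_. 0) \<longrightarrow> (\<forall>p. \<bar>y p\<bar> \<le> B)"
proof -
  define K where "K = real (card (pairs n))"
  define W where "W = (\<Sum>l<m. w l)"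
  define T where "T = (\<Sum>l<m. \<Sum>p\<in>pairs n. \<bar>t l p\<bar>)"
  have K: "0 < K"
    using pairs_nonempty[OF n] finite_pairs by (simp add: K_def card_gt_0_iff)
  have W: "0 < W"
    using m w unfolding W_def by (intro sum_pos) (auto simp: lessThan_empty_iff)
  have w0: "0 \<le> w l" if "l < m" for l
    using w[OF that] by simp
  have T: "\<bar>t l p\<bar> \<le> T" if "l < m" "p \<in> pairs n" for l p
  proof -
    have "\<bar>t l p\<bar> \<le> (\<Sum>p\<in>pairs n. \<bar>t l p\<bar>)"
      using finite_pairs that by (intro member_le_sum) auto
    also have "\<dots> \<le> T"
      unfolding T_def using that by (intro member_le_sum[of l]) (auto intro: sum_nonneg)
    finally show ?thesis .
  qed
  have T0: "0 \<le> T"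
    unfolding T_def by (intro sum_nonneg) auto
  have "d_trop n (\<lambda>_. 0) (t l) \<le> K * T" if l: "l < m" for l
    unfolding K_def
  proof (rule d_trop_le[OF pairs_nonempty[OF n]])
    fix p
    assume "p \<in> pairs n"
    with T[OF l] show "0 - t l p \<le> T"
      by (simp add: abs_le_iff)
  qed
  then have "fw_cost n m t w (\<lambda>_. 0) \<le> (\<Sum>l<m. w l * (K * T))"
    unfolding fw_cost_def by (intro sum_mono mult_left_mono) (auto intro: w0)
  also have "\<dots> = K * W * T"
    unfolding W_def sum_distrib_right[symmetric] by (simp add: mult_ac)
  finally have cost0: "fw_cost n m t w (\<lambda>_. 0) \<le> K * W * T" .
  have above: "y q \<le> 2 * T"
    if y: "fw_cost n m t w y \<le> fw_cost n m t w (\<lambda>_. 0)" and q: "q \<in> pairs n" for y q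
  proof -
    have "K * (y q - T) \<le> d_trop n y (t l)" if l: "l < m" for l
    proof -
      have "t l q \<le> T"
        using T[OF l q] by simp
      then have "K * (y q - T) \<le> K * (y q - t l q)"
        using K by (intro mult_left_mono) auto
      also have "\<dots> \<le> d_trop n y (t l)"
        unfolding K_def by (rule d_trop_ge[OF q])
      finally show ?thesis .
    qed
    then have "(\<Sum>l<m. w l * (K * (y q - T))) \<le> fw_cost n m t w y"
      unfolding fw_cost_def by (intro sum_mono mult_left_mono) (auto intro: w0)
    moreover have "(\<Sum>l<m. w l * (K * (y q - T))) = K * W * (y q - T)"
      unfolding W_def sum_distrib_right[symmetric] by (simp add: mult_ac)
    ultimately have "(K * W) * (y q - T) \<le> (K * W) * T"
      using y cost0 by linarith
    then have "y q - T \<le> T"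
      using K W by (simp only: mult_le_cancel_left_pos mult_pos_pos)
    then show ?thesis
      by simp
  qed
  have "\<bar>y p\<bar> \<le> K * (2 * T)"
    if "y \<in> HN n" and "fw_cost n m t w y \<le> fw_cost n m t w (\<lambda>_. 0)" for y p
    unfolding K_def using T0 by (intro HN_abs_le[OF that(1) above[OF that(2)]]) auto
  then show ?thesis
    by blast
qed

lemma FW_set_nonempty:
  assumes "2 \<le> n" and "1 \<le> m" and "\<And>l. l < m \<Longrightarrow> 0 < w l"
  shows "FW_set n m t w \<noteq> {}"
proof -
  define F where "F = fw_cost n m t w"
  obtain B where B: "\<And>y p. y \<in> HN n \<Longrightarrow> F y \<le> F (\<lambda>_. 0) \<Longrightarrow> \<bar>y p\<bar> \<le> B"
    using fw_cost_sublevel_bounded[where t = t and w = w, OF assms] unfolding F_def by blast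
  define S where "S = {x. \<forall>p. \<bar>x p\<bar> \<le> B} \<inter> HN n"
  have "(\<lambda>_. 0) \<in> S"
    using B[of "\<lambda>_. 0"] by (auto simp: S_def HN_def)
  moreover have "compact S"
    unfolding S_def by (intro compact_Int_closed compact_abs_le_box closed_HN)
  ultimately obtain x where x: "x \<in> S" and min: "\<And>y. y \<in> S \<Longrightarrow> F x \<le> F y"
    using continuous_attains_inf[of S F] continuous_on_subset[OF continuous_on_fw_cost]
    unfolding F_def by blast
  have "F x \<le> F y" if y: "y \<in> HN n" for y
  proof (cases "F y \<le> F (\<lambda>_. 0)")
    case True
    with y B show ?thesis
      by (auto simp: S_def intro: min)
  next
    case False
    with min[OF \<open>(\<lambda>_. 0) \<in> S\<close>] show ?thesis
      by linarith
  qed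
  with x have "x \<in> FW_set n m t w"
    by (simp add: FW_set_iff S_def F_def)
  then show ?thesis
    by blast
qed

lemma compact_FW_set:
  assumes "2 \<le> n" and "1 \<le> m" and "\<And>l. l < m \<Longrightarrow> 0 < w l"
  shows "compact (FW_set n m t w)"
proof -
  obtain B where B: "\<And>y p. y \<in> HN n \<Longrightarrow> fw_cost n m t w y \<le> fw_cost n m t w (\<lambda>_. 0) \<Longrightarrow> \<bar>y p\<bar> \<le> B"
    using fw_cost_sublevel_bounded[where t = t and w = w, OF assms] by blast
  have "(\<lambda>_. 0) \<in> HN n"
    by (simp add: HN_def)
  then have "FW_set n m t w \<subseteq> {x. \<forall>p. \<bar>x p\<bar> \<le> B}"
    using B by (auto simp: FW_set_iff)
  then have "FW_set n m t w = {x. \<forall>p. \<bar>x p\<bar> \<le> B} \<inter> FW_set n m t w"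
    by blast
  then show ?thesis
    by (metis compact_Int_closed compact_abs_le_box closed_FW_set)
qed

lemma sum_squares_maximizer_in_vertices:
  fixes S :: "(nat set \<Rightarrow> real) set"
  assumes P: "finite P" and support: "\<And>x p. x \<in> S \<Longrightarrow> p \<notin> P \<Longrightarrow> x p = 0"
    and v: "v \<in> S" and max: "\<And>x. x \<in> S \<Longrightarrow> (\<Sum>p\<in>P. (x p)\<^sup>2) \<le> (\<Sum>p\<in>P. (v p)\<^sup>2)"
  shows "v \<in> vertices S"
  unfolding vertices_def
proof (intro CollectI conjI notI)
  assume "\<exists>a\<in>S. \<exists>b\<in>S. \<exists>u::real. a \<noteq> b \<and> 0 < u \<and> u < 1 \<and> v = (\<lambda>p. (1 - u) * a p + u * b p)"
  then obtain a b u where a: "a \<in> S" and b: "b \<in> S" and "a \<noteq> b" and u: "0 < u" "u < 1"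
    and v_eq: "v = (\<lambda>p. (1 - u) * a p + u * b p)"
    by blast
  define sq where "sq = (\<lambda>x :: nat set \<Rightarrow> real. \<Sum>p\<in>P. (x p)\<^sup>2)"
  obtain p0 where "a p0 \<noteq> b p0"
    using \<open>a \<noteq> b\<close> by (meson ext)
  then have "p0 \<in> P"
    using support[OF a] support[OF b] by metis
  have "0 < (a p0 - b p0)\<^sup>2"
    using \<open>a p0 \<noteq> b p0\<close> by simp
  also have "\<dots> \<le> (\<Sum>p\<in>P. (a p - b p)\<^sup>2)"
    using P \<open>p0 \<in> P\<close> by (intro member_le_sum) auto
  finally have dist: "0 < (\<Sum>p\<in>P. (a p - b p)\<^sup>2)" .
  have "(v p)\<^sup>2 = (1 - u) * (a p)\<^sup>2 + u * (b p)\<^sup>2 - u * (1 - u) * (a p - b p)\<^sup>2" for p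
    by (simp add: v_eq power2_eq_square algebra_simps)
  then have "sq v = (1 - u) * sq a + u * sq b - u * (1 - u) * (\<Sum>p\<in>P. (a p - b p)\<^sup>2)"
    unfolding sq_def by (simp add: sum_subtractf sum.distrib sum_distrib_left)
  also have "\<dots> < (1 - u) * sq v + u * sq v"
  proof -
    have "(1 - u) * sq a \<le> (1 - u) * sq v" "u * sq b \<le> u * sq v"
      using max[OF a] max[OF b] u unfolding sq_def by (simp_all add: mult_left_mono)
    moreover have "0 < u * (1 - u) * (\<Sum>p\<in>P. (a p - b p)\<^sup>2)"
      using u dist by simp
    ultimately show ?thesis
      by linarith
  qed
  finally show False
    by (simp add: algebra_simps)
qed (fact v)

lemma vertices_FW_set_nonempty:
  assumes "2 \<le> n" and "1 \<le> m" and "\<And>l. l < m \<Longrightarrow> 0 < w l"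
  shows "vertices (FW_set n m t w) \<noteq> {}"
proof -
  have "continuous_on (FW_set n m t w) (\<lambda>x. \<Sum>p\<in>pairs n. (x p)\<^sup>2)"
    by (intro continuous_intros continuous_on_subset[OF continuous_on_product_coordinates]) auto
  then obtain v where v: "v \<in> FW_set n m t w"
    and max: "\<And>x. x \<in> FW_set n m t w \<Longrightarrow> (\<Sum>p\<in>pairs n. (x p)\<^sup>2) \<le> (\<Sum>p\<in>pairs n. (v p)\<^sup>2)"
    using continuous_attains_sup[OF compact_FW_set[where t = t and w = w, OF assms]
        FW_set_nonempty[where t = t and w = w, OF assms]]
    by blast
  have "v \<in> vertices (FW_set n m t w)"
    by (rule sum_squares_maximizer_in_vertices[OF finite_pairs _ v max]) (auto simp: FW_set_iff HN_def)
  then show ?thesis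
    by blast
qed

lemma vertices_subset: "vertices S \<subseteq> S"
  by (auto simp: vertices_def)

lemma consensus_mono:
  assumes m: "1 \<le> m" and w: "\<And>l. l < m \<Longrightarrow> 0 < w l"
    and a: "a \<in> pairs n" and b: "b \<in> pairs n" and le: "\<And>l. l < m \<Longrightarrow> t l a \<le> t l b"
  shows "consensus n m t w a \<le> consensus n m t w b"
proof -
  define V where "V = vertices (FW_set n m t w)"
  have "v a \<le> v b" if "v \<in> V" for v
  proof (rule FW_set_mono[OF m _ _ a b])
    show "v \<in> FW_set n m t w"
      using that vertices_subset by (auto simp: V_def)
  qed (use w le in auto)
  then have "(\<Sum>v\<in>V. v a) \<le> (\<Sum>v\<in>V. v b)"
    by (rule sum_mono)
  then show ?thesis
    by (simp add: consensus_def V_def[symmetric] divide_right_mono)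
qed

lemma consensus_strict_mono:
  assumes n: "2 \<le> n" and m: "1 \<le> m" and w: "\<And>l. l < m \<Longrightarrow> 0 < w l"
    and a: "a \<in> pairs n" and b: "b \<in> pairs n" and less: "\<And>l. l < m \<Longrightarrow> t l a < t l b"
  shows "consensus n m t w a < consensus n m t w b"
proof -
  define V where "V = vertices (FW_set n m t w)"
  have "finite V"
    unfolding V_def using w by (intro finite_vertices_FW_set less_imp_le)
  moreover have "V \<noteq> {}"
    unfolding V_def by (rule vertices_FW_set_nonempty[OF n m]) (use w in auto)
  moreover have "v a < v b" if "v \<in> V" for v
  proof (rule FW_set_strict_mono[OF m _ _ a b])
    show "v \<in> FW_set n m t w"
      using that vertices_subset by (auto simp: V_def)
  qed (use w less in auto)
  ultimately have "(\<Sum>v\<in>V. v a) < (\<Sum>v\<in>V. v b)" and "0 < real (card V)"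
    by (simp_all add: sum_strict_mono card_gt_0_iff)
  then show ?thesis
    by (simp add: consensus_def V_def[symmetric] divide_strict_right_mono)
qed

lemma tree_space_le_if_not_has_triple:
  assumes t: "t \<in> tree_space n" and ijk: "i < n" "j < n" "k < n" "i \<noteq> j" "i \<noteq> k" "j \<noteq> k"
    and no_triple: "\<not> has_triple t i j k"
  shows "t {i, j} \<le> t {i, k}"
proof -
  obtain \<delta> c where u: "ultrametric n \<delta>" and t_eq: "\<forall>p\<in>pairs n. t p = - \<delta> p + c"
    using t by (auto simp: tree_space_def)
  have "(\<delta> {i, j} = \<delta> {i, k} \<and> \<delta> {j, k} \<le> \<delta> {i, j}) \<or> (\<delta> {i, j} = \<delta> {j, k} \<and> \<delta> {i, k} \<le> \<delta> {i, j})
      \<or> (\<delta> {i, k} = \<delta> {j, k} \<and> \<delta> {i, j} \<le> \<delta> {i, k})"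
    using u ijk unfolding ultrametric_def Let_def by blast
  moreover have "t {i, j} = - \<delta> {i, j} + c" "t {i, k} = - \<delta> {i, k} + c" "t {j, k} = - \<delta> {j, k} + c"
    using t_eq ijk by (simp_all add: doubleton_in_pairs)
  ultimately show ?thesis
    using no_triple unfolding has_triple_def by auto
qed

lemma has_triple_consensus_if_all:
  assumes m: "1 \<le> m" and w: "\<And>l. l < m \<Longrightarrow> 0 < w l"
    and ijk: "i < n" "j < n" "k < n" "i \<noteq> j" "i \<noteq> k" "j \<noteq> k"
    and all: "\<And>l. l < m \<Longrightarrow> has_triple (t l) i j k"
  shows "has_triple (consensus n m t w) i j k"
proof -
  have ij: "{i, j} \<in> pairs n" and ik: "{i, k} \<in> pairs n" and jk: "{j, k} \<in> pairs n"
    using ijk by (auto intro: doubleton_in_pairs)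
  have n: "2 \<le> n"
    using ijk by linarith
  have t: "t l {i, k} = t l {j, k}" "t l {i, k} < t l {i, j}" if "l < m" for l
    using all[OF that] unfolding has_triple_def by auto
  have "consensus n m t w {i, k} \<le> consensus n m t w {j, k}"
    by (rule consensus_mono[OF m _ ik jk]) (use w t in auto)
  moreover have "consensus n m t w {j, k} \<le> consensus n m t w {i, k}"
    by (rule consensus_mono[OF m _ jk ik]) (use w t in auto)
  moreover have "consensus n m t w {i, k} < consensus n m t w {i, j}"
    by (rule consensus_strict_mono[OF n m _ ik ij]) (use w t in auto)
  ultimately show ?thesis
    unfolding has_triple_def by simp
qed

lemma ex_has_triple_if_has_triple_consensus:
  assumes m: "1 \<le> m" and w: "\<And>l. l < m \<Longrightarrow> 0 < w l"
    and trees: "\<And>l. l < m \<Longrightarrow> t l \<in> tree_space n"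
    and ijk: "i < n" "j < n" "k < n" "i \<noteq> j" "i \<noteq> k" "j \<noteq> k"
    and triple: "has_triple (consensus n m t w) i j k"
  shows "\<exists>l<m. has_triple (t l) i j k"
proof (rule ccontr)
  assume "\<not> (\<exists>l<m. has_triple (t l) i j k)"
  then have "t l {i, j} \<le> t l {i, k}" if "l < m" for l
    using that trees ijk by (intro tree_space_le_if_not_has_triple) auto
  then have "consensus n m t w {i, j} \<le> consensus n m t w {i, k}"
    using ijk by (intro consensus_mono[OF m _ doubleton_in_pairs doubleton_in_pairs]) (use w in auto)
  with triple show False
    unfolding has_triple_def by simp
qed

theorem corollary4p4:
  fixes n m :: nat and t :: "nat \<Rightarrow> nat set \<Rightarrow> real" and w :: "nat \<Rightarrow> real"
  assumes "n \<ge> 3" and "m \<ge> 1"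
    and "\<And>l. l < m \<Longrightarrow> t l \<in> tree_space n"
    and "\<And>l. l < m \<Longrightarrow> w l > 0"
  shows "\<forall>i<n. \<forall>j<n. \<forall>k<n. i \<noteq> j \<and> i \<noteq> k \<and> j \<noteq> k \<longrightarrow>
           ((\<forall>l<m. has_triple (t l) i j k) \<longrightarrow> has_triple (consensus n m t w) i j k) \<and>
           (has_triple (consensus n m t w) i j k \<longrightarrow> (\<exists>l<m. has_triple (t l) i j k))"
proof (intro allI impI conjI)
  fix i j k
  assume ijk: "i < n" "j < n" "k < n" "i \<noteq> j \<and> i \<noteq> k \<and> j \<noteq> k"
  show "has_triple (consensus n m t w) i j k" if "\<forall>l<m. has_triple (t l) i j k"
    using ijk that by (intro has_triple_consensus_if_all[OF assms(2)]) (use assms(4) in auto)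
  show "\<exists>l<m. has_triple (t l) i j k" if "has_triple (consensus n m t w) i j k"
    using ijk that by (intro ex_has_triple_if_has_triple_consensus[OF assms(2)]) (use assms(3,4) in auto)
qed

end
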